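(* Let $(X,\rho)$ be a locally bounded $F$-space and $(Y,d)$ a metric vector space with translation-invariant non-decreasing metric $d$. Let $T:X\to Y$ and $T_n:X\to Y$ ($n\in\mathbb{N}$) be continuous linear operators. Then the following are equivalent: (i) $\{T_n\}$ converges almost arbitrarily slowly to $T$; (ii) $\{T_n\}$ converges pointwise to $T$ but does not converge to $T$ in the topology of bounded convergence.
   Context: An $F$-space is a complete metric vector space with translation-invariant metric. $d$ is non-decreasing if $d(\alpha y,0)\le d(y,0)$ for $0\le\alpha\le1$. $T_n$ converges almost arbitrarily slowly to $T$ if (C1) $\lim_n d(T_nx,Tx)=0$ for all $x\in X$ and (C2) for every non-increasing sequence $\{\varepsilon_n\}$ of nonnegative reals tending to $0$ there exists $x\in X$ with $d(T_nx,Tx)\ge\varepsilon_n$ for infinitely many $n$. The topology of bounded convergence is the topology of uniform convergence on bounded subsets of $X$, where $A\subseteq X$ is bounded if for every $r>0$ there is $\lambda>0$ with $A\subseteq\lambda\{x:\rho(x,0)\le r\}$. *)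

theory Defs
  imports "HOL-Analysis.Analysis"
begin

definition is_metric :: "('a \<Rightarrow> 'a \<Rightarrow> real) \<Rightarrow> bool" where
  "is_metric \<rho> \<longleftrightarrow>
     (\<forall>x y. 0 \<le> \<rho> x y) \<and> (\<forall>x y. \<rho> x y = 0 \<longleftrightarrow> x = y) \<and>
     (\<forall>x y. \<rho> x y = \<rho> y x) \<and> (\<forall>x y z. \<rho> x z \<le> \<rho> x y + \<rho> y z)"

definition translation_invariant :: "('a::real_vector \<Rightarrow> 'a \<Rightarrow> real) \<Rightarrow> bool" where
  "translation_invariant \<rho> \<longleftrightarrow> (\<forall>x y z. \<rho> (x + z) (y + z) = \<rho> x y)"

definition metric_vector_space :: "('a::real_vector \<Rightarrow> 'a \<Rightarrow> real) \<Rightarrow> bool" where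
  "metric_vector_space \<rho> \<longleftrightarrow> is_metric \<rho> \<and> translation_invariant \<rho> \<and>
     (\<forall>xs ys x y. (\<lambda>n. \<rho> (xs n) x) \<longlonglongrightarrow> 0 \<and> (\<lambda>n. \<rho> (ys n) y) \<longlonglongrightarrow> 0
        \<longrightarrow> (\<lambda>n. \<rho> (xs n + ys n) (x + y)) \<longlonglongrightarrow> 0) \<and>
     (\<forall>(as :: nat \<Rightarrow> real) xs a x. as \<longlonglongrightarrow> a \<and> (\<lambda>n. \<rho> (xs n) x) \<longlonglongrightarrow> 0
        \<longrightarrow> (\<lambda>n. \<rho> (as n *\<^sub>R xs n) (a *\<^sub>R x)) \<longlonglongrightarrow> 0)"

definition metric_complete :: "('a \<Rightarrow> 'a \<Rightarrow> real) \<Rightarrow> bool" where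
  "metric_complete \<rho> \<longleftrightarrow>
     (\<forall>s. (\<forall>e>0. \<exists>N. \<forall>m\<ge>N. \<forall>n\<ge>N. \<rho> (s m) (s n) < e) \<longrightarrow> (\<exists>x. (\<lambda>n. \<rho> (s n) x) \<longlonglongrightarrow> 0))"

definition F_space :: "('a::real_vector \<Rightarrow> 'a \<Rightarrow> real) \<Rightarrow> bool" where
  "F_space \<rho> \<longleftrightarrow> metric_vector_space \<rho> \<and> metric_complete \<rho>"

definition non_decreasing_metric :: "('a::real_vector \<Rightarrow> 'a \<Rightarrow> real) \<Rightarrow> bool" where
  "non_decreasing_metric d \<longleftrightarrow> (\<forall>y \<alpha>. 0 \<le> \<alpha> \<and> \<alpha> \<le> 1 \<longrightarrow> d (\<alpha> *\<^sub>R y) 0 \<le> d y 0)"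

definition metric_vs_bounded :: "('a::real_vector \<Rightarrow> 'a \<Rightarrow> real) \<Rightarrow> 'a set \<Rightarrow> bool" where
  "metric_vs_bounded \<rho> A \<longleftrightarrow>
     (\<forall>r>0. \<exists>c>0. A \<subseteq> (\<lambda>x. c *\<^sub>R x) ` {x. \<rho> x 0 \<le> r})"

definition locally_bounded :: "('a::real_vector \<Rightarrow> 'a \<Rightarrow> real) \<Rightarrow> bool" where
  "locally_bounded \<rho> \<longleftrightarrow>
     (\<exists>U. metric_vs_bounded \<rho> U \<and> (\<exists>r>0. {x. \<rho> x 0 < r} \<subseteq> U))"

definition continuous_op :: "('a \<Rightarrow> 'a \<Rightarrow> real) \<Rightarrow> ('b \<Rightarrow> 'b \<Rightarrow> real) \<Rightarrow> ('a \<Rightarrow> 'b) \<Rightarrow> bool" where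
  "continuous_op \<rho> d T \<longleftrightarrow>
     (\<forall>s x. (\<lambda>n. \<rho> (s n) x) \<longlonglongrightarrow> 0 \<longrightarrow> (\<lambda>n. d (T (s n)) (T x)) \<longlonglongrightarrow> 0)"

definition pointwise_conv :: "('b \<Rightarrow> 'b \<Rightarrow> real) \<Rightarrow> (nat \<Rightarrow> 'a \<Rightarrow> 'b) \<Rightarrow> ('a \<Rightarrow> 'b) \<Rightarrow> bool" where
  "pointwise_conv d Ts T \<longleftrightarrow> (\<forall>x. (\<lambda>n. d (Ts n x) (T x)) \<longlonglongrightarrow> 0)"

definition almost_arbitrarily_slowly ::
    "('b \<Rightarrow> 'b \<Rightarrow> real) \<Rightarrow> (nat \<Rightarrow> 'a \<Rightarrow> 'b) \<Rightarrow> ('a \<Rightarrow> 'b) \<Rightarrow> bool" where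
  "almost_arbitrarily_slowly d Ts T \<longleftrightarrow>
     pointwise_conv d Ts T \<and>
     (\<forall>\<epsilon> :: nat \<Rightarrow> real. antimono \<epsilon> \<and> (\<forall>n. 0 \<le> \<epsilon> n) \<and> \<epsilon> \<longlonglongrightarrow> 0 \<longrightarrow>
        (\<exists>x. \<exists>\<^sub>\<infinity>n. d (Ts n x) (T x) \<ge> \<epsilon> n))"

definition bounded_conv ::
    "('a::real_vector \<Rightarrow> 'a \<Rightarrow> real) \<Rightarrow> ('b \<Rightarrow> 'b \<Rightarrow> real) \<Rightarrow> (nat \<Rightarrow> 'a \<Rightarrow> 'b) \<Rightarrow> ('a \<Rightarrow> 'b) \<Rightarrow> bool" where
  "bounded_conv \<rho> d Ts T \<longleftrightarrow>
     (\<forall>A. metric_vs_bounded \<rho> A \<longrightarrow>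
        (\<forall>e>0. \<exists>N. \<forall>n\<ge>N. \<forall>x\<in>A. d (Ts n x) (T x) < e))"

end

theory Submission
  imports Defs
begin

text \<open>
  Direction (ii) \<Rightarrow> (i) is a gliding hump argument. Since convergence is not uniform on some
  bounded set, and bounded sets are absorbed by small balls, there are arbitrarily late indices
  at which \<open>T\<^sub>n - T\<close> is large (by a fixed amount) on arbitrarily small vectors. Choosing
  such humps inductively, each one later than where the previous partial sum has become
  negligible and each one so small that the remaining tail cannot cancel it, the series of humps
  converges by completeness to a vector \<open>x\<close> with \<open>d(T\<^sub>n x, T x) \<ge> \<epsilon>\<^sub>n\<close> at every hump index.

  Direction (i) \<Rightarrow> (ii): local boundedness writes \<open>X\<close> as a countable union of bounded sets
  \<open>B\<^sub>k\<close>. If convergence were uniform on each \<open>B\<^sub>k\<close>, a diagonal choice produces a null sequence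
  \<open>\<epsilon>\<^sub>n\<close> decaying so slowly that eventually \<open>d(T\<^sub>n x, T x) < \<epsilon>\<^sub>n\<close> on each \<open>B\<^sub>k\<close>, hence
  for every \<open>x\<close>, contradicting (i).
\<close>

locale invariant_metric =
  fixes \<rho> :: "'a::real_vector \<Rightarrow> 'a \<Rightarrow> real"
  assumes metric: "is_metric \<rho>" and invariant: "translation_invariant \<rho>"
begin

lemma nonneg: "0 \<le> \<rho> x y"
  using metric unfolding is_metric_def by blast

lemma self: "\<rho> x x = 0"
  using metric unfolding is_metric_def by blast

lemma commute: "\<rho> x y = \<rho> y x"
  using metric unfolding is_metric_def by blast

lemma triangle: "\<rho> x z \<le> \<rho> x y + \<rho> y z"
  using metric unfolding is_metric_def by blast

lemma eq_diff_zero: "\<rho> x y = \<rho> (x - y) 0"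
  using invariant unfolding translation_invariant_def by (metis add.left_neutral diff_add_cancel)

lemma add_le: "\<rho> (x + y) 0 \<le> \<rho> x 0 + \<rho> y 0"
  using triangle[of "x + y" 0 y] eq_diff_zero[of "x + y" y] by simp

lemma minus: "\<rho> (- x) 0 = \<rho> x 0"
  using eq_diff_zero[of 0 x] commute[of 0 x] by simp

lemma diff_le: "\<rho> (x - y) 0 \<le> \<rho> x 0 + \<rho> y 0"
  using add_le[of x "- y"] minus[of y] by simp

lemma of_nat_scaleR_le: "\<rho> (real m *\<^sub>R x) 0 \<le> real m * \<rho> x 0"
proof (induction m)
  case 0
  then show ?case using self by simp
next
  case (Suc m)
  have "\<rho> (real (Suc m) *\<^sub>R x) 0 = \<rho> (real m *\<^sub>R x + x) 0"
    by (simp add: algebra_simps)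
  also have "\<dots> \<le> real m * \<rho> x 0 + \<rho> x 0"
    using add_le[of "real m *\<^sub>R x" x] Suc by linarith
  finally show ?case by (simp add: algebra_simps)
qed

lemma middle_le: "\<rho> y 0 \<le> \<rho> (x + y + z) 0 + \<rho> x 0 + \<rho> z 0"
  using diff_le[of "x + y + z - x" z] diff_le[of "x + y + z" x] by (simp add: algebra_simps)

lemma telescoping_limit:
  assumes complete: "metric_complete \<rho>"
    and step: "\<And>k. \<rho> (s (Suc k) - s k) 0 \<le> D k - D (Suc k)"
    and D: "D \<longlonglongrightarrow> 0"
  obtains x where "\<And>k. \<rho> (x - s k) 0 \<le> D k"
proof -
  have D_nonneg: "0 \<le> D k" for k
  proof (rule decseq_ge[OF _ D])
    show "decseq D"
      using step nonneg by (intro decseq_SucI) (smt (verit))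
  qed
  have partial: "\<rho> (s m - s k) 0 \<le> D k - D m" if "k \<le> m" for k m
    using that
  proof (induction m rule: dec_induct)
    case base
    then show ?case using self by simp
  next
    case (step m)
    have "\<rho> (s (Suc m) - s k) 0 \<le> \<rho> (s m - s k) 0 + \<rho> (s (Suc m) - s m) 0"
      using add_le[of "s m - s k" "s (Suc m) - s m"] by simp
    then show ?case using step.IH assms(2)[of m] by linarith
  qed
  have close: "\<rho> (s m) (s n) \<le> 2 * D N" if "N \<le> m" "N \<le> n" for N m n
    using triangle[of "s m" "s n" "s N"] partial[OF that(1)] partial[OF that(2)]
      eq_diff_zero[of "s m" "s N"] eq_diff_zero[of "s n" "s N"] commute[of "s N" "s n"]
      D_nonneg[of m] D_nonneg[of n] by linarith
  have "\<exists>x. (\<lambda>n. \<rho> (s n) x) \<longlonglongrightarrow> 0"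
    using complete unfolding metric_complete_def
  proof (elim allE impE, intro allI impI)
    fix r :: real assume "r > 0"
    then obtain N where "\<forall>n\<ge>N. D n < r / 2"
      using D order_tendstoD(2)[of D 0 sequentially "r / 2"] by (auto simp: eventually_sequentially)
    then show "\<exists>N. \<forall>m\<ge>N. \<forall>n\<ge>N. \<rho> (s m) (s n) < r"
      using close by (metis order.refl order.strict_trans1 less_divide_eq_numeral1(1) mult.commute)
  qed
  then obtain x where x: "(\<lambda>n. \<rho> (s n) x) \<longlonglongrightarrow> 0" by blast
  have "\<rho> (x - s k) 0 \<le> D k" for k
  proof (rule LIMSEQ_le_const)
    show "(\<lambda>m. \<rho> (s m) x + D k) \<longlonglongrightarrow> D k"
      using tendsto_add[OF x tendsto_const[of "D k"]] by simp
    have "\<rho> (x - s k) 0 \<le> \<rho> (s m) x + D k" if "k \<le> m" for m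
      using triangle[of x "s k" "s m"] commute[of x "s m"] eq_diff_zero[of x "s k"]
        eq_diff_zero[of "s m" "s k"] partial[OF that] D_nonneg[of m] by linarith
    then show "\<exists>N. \<forall>m\<ge>N. \<rho> (x - s k) 0 \<le> \<rho> (s m) x + D k" by blast
  qed
  then show thesis using that by blast
qed

end

lemma metric_vector_space_invariant_metric:
  "metric_vector_space \<rho> \<Longrightarrow> invariant_metric \<rho>"
  unfolding metric_vector_space_def invariant_metric_def by blast

lemma sequentially_null_imp_eps_delta:
  fixes a b :: "'x \<Rightarrow> real"
  assumes seq: "\<And>u. (\<lambda>n. a (u n)) \<longlonglongrightarrow> 0 \<Longrightarrow> (\<lambda>n. b (u n)) \<longlonglongrightarrow> 0"
    and nonneg: "\<And>v. 0 \<le> a v" and "\<tau> > 0"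
  shows "\<exists>\<delta>>0. \<forall>v. a v \<le> \<delta> \<longrightarrow> b v < \<tau>"
proof (rule ccontr)
  assume "\<not> ?thesis"
  moreover have "inverse (real (Suc j)) > 0" for j
    by simp
  ultimately have "\<forall>j. \<exists>v. a v \<le> inverse (real (Suc j)) \<and> \<tau> \<le> b v"
    by (meson not_less)
  then obtain u where u: "\<And>j. a (u j) \<le> inverse (real (Suc j))" "\<And>j. \<tau> \<le> b (u j)"
    by metis
  have "(\<lambda>j. a (u j)) \<longlonglongrightarrow> 0"
    by (rule Lim_null_comparison[OF _ LIMSEQ_inverse_real_of_nat]) (use u nonneg in simp)
  then have "eventually (\<lambda>j. b (u j) < \<tau>) sequentially"
    using seq order_tendstoD(2) \<open>\<tau> > 0\<close> by blast
  then obtain j where "b (u j) < \<tau>"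
    by (auto simp: eventually_sequentially)
  then show False
    using u(2)[of j] by simp
qed

lemma metric_vector_space_scaleR_tendsto:
  assumes "metric_vector_space \<rho>" "as \<longlonglongrightarrow> a" "(\<lambda>n. \<rho> (xs n) x) \<longlonglongrightarrow> 0"
  shows "(\<lambda>n. \<rho> (as n *\<^sub>R xs n) (a *\<^sub>R x)) \<longlonglongrightarrow> 0"
  using assms unfolding metric_vector_space_def by blast

lemma metric_vector_space_scaleR_small:
  assumes "metric_vector_space \<rho>" "\<tau> > 0"
  shows "\<exists>\<delta>>0. \<forall>t x. \<bar>t\<bar> \<le> \<delta> \<and> \<rho> x 0 \<le> \<delta> \<longrightarrow> \<rho> (t *\<^sub>R x) 0 < \<tau>"
proof -
  interpret invariant_metric \<rho>
    using assms(1) by (rule metric_vector_space_invariant_metric)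
  have "\<exists>\<delta>>0. \<forall>v. max \<bar>fst v\<bar> (\<rho> (snd v) 0) \<le> \<delta> \<longrightarrow> \<rho> (fst v *\<^sub>R snd v) 0 < \<tau>"
  proof (rule sequentially_null_imp_eps_delta[OF _ _ assms(2)])
    fix u :: "nat \<Rightarrow> real \<times> 'a"
    assume u: "(\<lambda>n. max \<bar>fst (u n)\<bar> (\<rho> (snd (u n)) 0)) \<longlonglongrightarrow> 0"
    have "(\<lambda>n. fst (u n)) \<longlonglongrightarrow> 0"
      by (rule Lim_null_comparison[OF _ u]) simp
    moreover have "(\<lambda>n. \<rho> (snd (u n)) 0) \<longlonglongrightarrow> 0"
      by (rule Lim_null_comparison[OF _ u]) (simp add: nonneg)
    ultimately have "(\<lambda>n. \<rho> (fst (u n) *\<^sub>R snd (u n)) (0 *\<^sub>R 0)) \<longlonglongrightarrow> 0"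
      by (rule metric_vector_space_scaleR_tendsto[OF assms(1)])
    then show "(\<lambda>n. \<rho> (fst (u n) *\<^sub>R snd (u n)) 0) \<longlonglongrightarrow> 0" by simp
  qed (simp add: nonneg)
  then show ?thesis by auto
qed

lemma metric_vs_bounded_inverse_scaleR_small:
  assumes "metric_vector_space \<rho>" "metric_vs_bounded \<rho> A" "\<tau> > 0"
  shows "\<exists>M. \<forall>m\<ge>M. \<forall>a\<in>A. \<rho> (inverse (real m) *\<^sub>R a) 0 < \<tau>"
proof -
  obtain \<delta> where \<delta>: "\<delta> > 0" "\<And>t x. \<bar>t\<bar> \<le> \<delta> \<Longrightarrow> \<rho> x 0 \<le> \<delta> \<Longrightarrow> \<rho> (t *\<^sub>R x) 0 < \<tau>"
    using metric_vector_space_scaleR_small[OF assms(1,3)] by blast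
  obtain c where c: "c > 0" "A \<subseteq> (\<lambda>x. c *\<^sub>R x) ` {x. \<rho> x 0 \<le> \<delta>}"
    using assms(2) \<delta>(1) unfolding metric_vs_bounded_def by blast
  obtain M :: nat where M: "c / \<delta> < real M"
    using reals_Archimedean2 by blast
  have "\<rho> (inverse (real m) *\<^sub>R a) 0 < \<tau>" if "M \<le> m" "a \<in> A" for m a
  proof -
    obtain b where b: "\<rho> b 0 \<le> \<delta>" "a = c *\<^sub>R b"
      using c(2) \<open>a \<in> A\<close> by blast
    have "real M \<le> real m"
      using \<open>M \<le> m\<close> by simp
    with M have m: "c / \<delta> < real m"
      by linarith
    moreover have "0 < c / \<delta>"
      using c(1) \<delta>(1) by simp
    ultimately have "0 < real m"
      by linarith
    have "c < real m * \<delta>"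
      using m \<delta>(1) by (simp add: pos_divide_less_eq)
    then have "c / real m < \<delta>"
      using \<open>0 < real m\<close> by (simp add: pos_divide_less_eq mult.commute)
    then have "\<bar>inverse (real m) * c\<bar> \<le> \<delta>"
      using c(1) by (simp add: field_simps)
    then have "\<rho> ((inverse (real m) * c) *\<^sub>R b) 0 < \<tau>"
      using \<delta>(2) b(1) by blast
    then show ?thesis
      using b(2) by simp
  qed
  then show ?thesis by blast
qed

lemma continuous_op_linear_small:
  assumes "is_metric \<rho>" "linear L" "continuous_op \<rho> d L" "\<eta> > 0"
  shows "\<exists>\<delta>>0. \<forall>v. \<rho> v 0 \<le> \<delta> \<longrightarrow> d (L v) 0 < \<eta>"
proof (rule sequentially_null_imp_eps_delta[OF _ _ assms(4)])
  fix u assume "(\<lambda>n. \<rho> (u n) 0) \<longlonglongrightarrow> 0"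
  then show "(\<lambda>n. d (L (u n)) 0) \<longlonglongrightarrow> 0"
    using assms(3) linear_0[OF assms(2)] unfolding continuous_op_def by metis
qed (use assms(1) in \<open>simp add: is_metric_def\<close>)

lemma continuous_op_linear_diff_small:
  assumes "is_metric \<rho>" "invariant_metric d"
    and "linear S" "continuous_op \<rho> d S" "linear T" "continuous_op \<rho> d T" "\<eta> > 0"
  shows "\<exists>\<delta>>0. \<forall>v. \<rho> v 0 \<le> \<delta> \<longrightarrow> d (S v - T v) 0 < \<eta>"
proof -
  obtain \<delta>\<^sub>S where "\<delta>\<^sub>S > 0" "\<forall>v. \<rho> v 0 \<le> \<delta>\<^sub>S \<longrightarrow> d (S v) 0 < \<eta> / 2"
    using continuous_op_linear_small[OF assms(1,3,4)] assms(7) by (meson half_gt_zero)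
  moreover obtain \<delta>\<^sub>T where "\<delta>\<^sub>T > 0" "\<forall>v. \<rho> v 0 \<le> \<delta>\<^sub>T \<longrightarrow> d (T v) 0 < \<eta> / 2"
    using continuous_op_linear_small[OF assms(1,5,6)] assms(7) by (meson half_gt_zero)
  ultimately show ?thesis
  proof (intro exI[of _ "min \<delta>\<^sub>S \<delta>\<^sub>T"] conjI allI impI)
    fix v assume "\<rho> v 0 \<le> min \<delta>\<^sub>S \<delta>\<^sub>T"
    then have "d (S v) 0 < \<eta> / 2" "d (T v) 0 < \<eta> / 2"
      using \<open>\<forall>v. \<rho> v 0 \<le> \<delta>\<^sub>S \<longrightarrow> d (S v) 0 < \<eta> / 2\<close>
        \<open>\<forall>v. \<rho> v 0 \<le> \<delta>\<^sub>T \<longrightarrow> d (T v) 0 < \<eta> / 2\<close> by auto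
    then show "d (S v - T v) 0 < \<eta>"
      using invariant_metric.diff_le[OF assms(2), of "S v" "T v"] by linarith
  qed simp
qed

lemma not_bounded_conv_small_humps:
  assumes \<rho>: "metric_vector_space \<rho>" and d: "invariant_metric d"
    and lin: "\<And>n. linear (Ts n)" "linear T"
    and "\<not> bounded_conv \<rho> d Ts T" and "\<Delta> > 0"
  shows "\<exists>c>0. \<forall>N. \<exists>n\<ge>N. \<exists>w. \<rho> w 0 < \<Delta> \<and> c \<le> d (Ts n w - T w) 0"
proof -
  obtain A e where A: "metric_vs_bounded \<rho> A" and e: "e > 0"
    and hump: "\<And>N. \<exists>n\<ge>N. \<exists>a\<in>A. e \<le> d (Ts n a - T a) 0"
    using assms(5) invariant_metric.eq_diff_zero[OF d]
    unfolding bounded_conv_def by (auto simp: not_less)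
  obtain M where M: "\<And>m a. M \<le> m \<Longrightarrow> a \<in> A \<Longrightarrow> \<rho> (inverse (real m) *\<^sub>R a) 0 < \<Delta>"
    using metric_vs_bounded_inverse_scaleR_small[OF \<rho> A \<open>\<Delta> > 0\<close>] by blast
  define m where "m = Suc M"
  have "e / real m \<le> d (Ts n w - T w) 0" if "e \<le> d (Ts n a - T a) 0" "w = inverse (real m) *\<^sub>R a"
    for n a w
  proof -
    have "Ts n w - T w = inverse (real m) *\<^sub>R (Ts n a - T a)"
      using that(2) linear_scale[OF linear_compose_sub[OF lin]] by simp
    then have "Ts n a - T a = real m *\<^sub>R (Ts n w - T w)"
      by (simp add: m_def)
    then have "e \<le> real m * d (Ts n w - T w) 0"
      using that(1) invariant_metric.of_nat_scaleR_le[OF d, of m "Ts n w - T w"] by simp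
    then show ?thesis
      by (simp add: m_def divide_le_eq mult.commute)
  qed
  moreover have "\<rho> (inverse (real m) *\<^sub>R a) 0 < \<Delta>" if "a \<in> A" for a
    using M[OF _ that, of m] by (simp add: m_def)
  ultimately have "\<exists>n\<ge>N. \<exists>w. \<rho> w 0 < \<Delta> \<and> e / real m \<le> d (Ts n w - T w) 0" for N
    using hump[of N] by blast
  moreover have "e / real m > 0"
    using e by (simp add: m_def)
  ultimately show ?thesis by blast
qed

text \<open>
  A state \<open>(n, s, \<Delta>)\<close> records the index of the latest hump, the sum \<open>s\<close> of the humps chosen
  so far, and the radius \<open>\<Delta>\<close> within which the sum of all later humps must stay.
\<close>
definition hump_successor ::
    "('a::real_vector \<Rightarrow> 'a \<Rightarrow> real) \<Rightarrow> ('b::real_vector \<Rightarrow> 'b \<Rightarrow> real) \<Rightarrow> (nat \<Rightarrow> 'a \<Rightarrow> 'b) \<Rightarrow>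
      (nat \<Rightarrow> real) \<Rightarrow> nat \<times> 'a \<times> real \<Rightarrow> nat \<times> 'a \<times> real \<Rightarrow> bool" where
  "hump_successor \<rho> d S \<epsilon> = (\<lambda>(n, s, \<Delta>) (n', s', \<Delta>').
     n < n' \<and> 0 < \<Delta>' \<and> \<Delta>' \<le> \<Delta> / 2 \<and> \<rho> (s' - s) 0 \<le> \<Delta> - \<Delta>' \<and>
     (\<exists>c. c \<le> d (S n' (s' - s)) 0 \<and> \<epsilon> n' \<le> c / 2 \<and> d (S n' s) 0 < c / 4 \<and>
          (\<forall>v. \<rho> v 0 \<le> \<Delta>' \<longrightarrow> d (S n' v) 0 < c / 4)))"

lemma hump_successor_exists:
  fixes \<rho> :: "'a::real_vector \<Rightarrow> 'a \<Rightarrow> real" and d :: "'b::real_vector \<Rightarrow> 'b \<Rightarrow> real"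
  assumes pointwise: "\<And>x. (\<lambda>n. d (S n x) 0) \<longlonglongrightarrow> 0"
    and cont: "\<And>n \<eta>. \<eta> > 0 \<Longrightarrow> \<exists>\<delta>>0. \<forall>v. \<rho> v 0 \<le> \<delta> \<longrightarrow> d (S n v) 0 < \<eta>"
    and humps: "\<And>\<Delta>. \<Delta> > 0 \<Longrightarrow> \<exists>c>0. \<forall>N. \<exists>n\<ge>N. \<exists>w. \<rho> w 0 < \<Delta> \<and> c \<le> d (S n w) 0"
    and \<epsilon>: "\<epsilon> \<longlonglongrightarrow> 0" and "\<Delta> > 0"
  shows "\<exists>n' s' \<Delta>'. hump_successor \<rho> d S \<epsilon> (n, s, \<Delta>) (n', s', \<Delta>')"
proof -
  obtain c where c: "c > 0" "\<And>N. \<exists>n\<ge>N. \<exists>w. \<rho> w 0 < \<Delta> / 2 \<and> c \<le> d (S n w) 0"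
    using humps[of "\<Delta> / 2"] \<open>\<Delta> > 0\<close> by auto
  have "c / 2 > 0" "c / 4 > 0"
    using c(1) by simp_all
  then have "eventually (\<lambda>n. \<epsilon> n < c / 2) sequentially"
    and "eventually (\<lambda>n. d (S n s) 0 < c / 4) sequentially"
    using order_tendstoD(2)[OF \<epsilon>] order_tendstoD(2)[OF pointwise[of s]] by blast+
  then obtain N where N: "\<And>n. N \<le> n \<Longrightarrow> \<epsilon> n < c / 2 \<and> d (S n s) 0 < c / 4"
    using eventually_conj eventually_sequentially by (metis (mono_tags, lifting))
  obtain n' w where n': "max N (Suc n) \<le> n'" and w: "\<rho> w 0 < \<Delta> / 2" "c \<le> d (S n' w) 0"
    using c(2) by blast
  obtain \<delta> where \<delta>: "\<delta> > 0" "\<forall>v. \<rho> v 0 \<le> \<delta> \<longrightarrow> d (S n' v) 0 < c / 4"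
    using cont[of "c / 4" n'] c(1) by auto
  have "hump_successor \<rho> d S \<epsilon> (n, s, \<Delta>) (n', s + w, min \<delta> (\<Delta> / 2))"
    unfolding hump_successor_def case_prod_conv
  proof (intro conjI exI)
    show "n < n'" "0 < min \<delta> (\<Delta> / 2)" "min \<delta> (\<Delta> / 2) \<le> \<Delta> / 2"
      using n' \<delta>(1) \<open>\<Delta> > 0\<close> by auto
    show "\<rho> (s + w - s) 0 \<le> \<Delta> - min \<delta> (\<Delta> / 2)"
      using w(1) by simp
    show "c \<le> d (S n' (s + w - s)) 0"
      using w(2) by simp
    show "\<epsilon> n' \<le> c / 2" "d (S n' s) 0 < c / 4"
      using N[of n'] n' by auto
    show "\<forall>v. \<rho> v 0 \<le> min \<delta> (\<Delta> / 2) \<longrightarrow> d (S n' v) 0 < c / 4"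
      using \<delta>(2) by auto
  qed
  then show ?thesis by blast
qed

lemma hump_sequence:
  fixes \<rho> :: "'a::real_vector \<Rightarrow> 'a \<Rightarrow> real" and d :: "'b::real_vector \<Rightarrow> 'b \<Rightarrow> real"
  assumes pointwise: "\<And>x. (\<lambda>n. d (S n x) 0) \<longlonglongrightarrow> 0"
    and cont: "\<And>n \<eta>. \<eta> > 0 \<Longrightarrow> \<exists>\<delta>>0. \<forall>v. \<rho> v 0 \<le> \<delta> \<longrightarrow> d (S n v) 0 < \<eta>"
    and humps: "\<And>\<Delta>. \<Delta> > 0 \<Longrightarrow> \<exists>c>0. \<forall>N. \<exists>n\<ge>N. \<exists>w. \<rho> w 0 < \<Delta> \<and> c \<le> d (S n w) 0"
    and \<epsilon>: "\<epsilon> \<longlonglongrightarrow> 0"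
  obtains N s D where
    "\<And>k. hump_successor \<rho> d S \<epsilon> (N k, s k, D k) (N (Suc k), s (Suc k), D (Suc k))"
proof -
  have "\<exists>f. \<forall>k. 0 < snd (snd (f k)) \<and> hump_successor \<rho> d S \<epsilon> (f k) (f (Suc k))"
  proof (rule dependent_nat_choice)
    show "\<exists>x :: nat \<times> 'a \<times> real. 0 < snd (snd x)"
      by (intro exI[of _ "(0, 0, 1)"]) simp
  next
    fix k and x :: "nat \<times> 'a \<times> real"
    assume "0 < snd (snd x)"
    moreover obtain n s \<Delta> where x: "x = (n, s, \<Delta>)"
      by (metis prod.exhaust)
    ultimately obtain n' s' \<Delta>' where "hump_successor \<rho> d S \<epsilon> x (n', s', \<Delta>')"
      using hump_successor_exists[where \<rho> = \<rho> and d = d and S = S, OF pointwise cont humps \<epsilon>]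
      by (metis snd_conv)
    then show "\<exists>y. 0 < snd (snd y) \<and> hump_successor \<rho> d S \<epsilon> x y"
      by (intro exI[of _ "(n', s', \<Delta>')"]) (simp add: hump_successor_def x)
  qed
  then obtain f where "\<And>k. hump_successor \<rho> d S \<epsilon> (f k) (f (Suc k))"
    by blast
  then show thesis
    using that[of "\<lambda>k. fst (f k)" "\<lambda>k. fst (snd (f k))" "\<lambda>k. snd (snd (f k))"] by simp
qed

lemma gliding_hump:
  fixes \<rho> :: "'a::real_vector \<Rightarrow> 'a \<Rightarrow> real" and d :: "'b::real_vector \<Rightarrow> 'b \<Rightarrow> real"
    and S :: "nat \<Rightarrow> 'a \<Rightarrow> 'b"
  assumes \<rho>: "invariant_metric \<rho>" "metric_complete \<rho>" and d: "invariant_metric d"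
    and lin: "\<And>n. linear (S n)"
    and pointwise: "\<And>x. (\<lambda>n. d (S n x) 0) \<longlonglongrightarrow> 0"
    and cont: "\<And>n \<eta>. \<eta> > 0 \<Longrightarrow> \<exists>\<delta>>0. \<forall>v. \<rho> v 0 \<le> \<delta> \<longrightarrow> d (S n v) 0 < \<eta>"
    and humps: "\<And>\<Delta>. \<Delta> > 0 \<Longrightarrow> \<exists>c>0. \<forall>N. \<exists>n\<ge>N. \<exists>w. \<rho> w 0 < \<Delta> \<and> c \<le> d (S n w) 0"
    and \<epsilon>: "\<epsilon> \<longlonglongrightarrow> 0"
  shows "\<exists>x. \<exists>\<^sub>\<infinity>n. \<epsilon> n \<le> d (S n x) 0"
proof -
  obtain N s D where
    "\<And>k. hump_successor \<rho> d S \<epsilon> (N k, s k, D k) (N (Suc k), s (Suc k), D (Suc k))"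
    using hump_sequence[where \<rho> = \<rho> and d = d and S = S, OF pointwise cont humps \<epsilon>] by blast
  then have N_less: "N k < N (Suc k)" and D_pos: "0 < D (Suc k)" and D_half: "D (Suc k) \<le> D k / 2"
    and s_step: "\<rho> (s (Suc k) - s k) 0 \<le> D k - D (Suc k)"
    and hump: "\<exists>c. c \<le> d (S (N (Suc k)) (s (Suc k) - s k)) 0 \<and> \<epsilon> (N (Suc k)) \<le> c / 2 \<and>
      d (S (N (Suc k)) (s k)) 0 < c / 4 \<and> (\<forall>v. \<rho> v 0 \<le> D (Suc k) \<longrightarrow> d (S (N (Suc k)) v) 0 < c / 4)"
    for k
    unfolding hump_successor_def by simp_all
  have "D k \<le> D 0 * (1 / 2) ^ k" for k
    by (induction k) (use D_half in \<open>auto intro: order.trans\<close>)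
  moreover have "0 \<le> D k" for k
    using D_pos[of k] D_half[of k] by linarith
  moreover have "(\<lambda>k. D 0 * (1 / 2) ^ k) \<longlonglongrightarrow> 0"
    by (intro tendsto_mult_right_zero LIMSEQ_power_zero) simp
  ultimately have "D \<longlonglongrightarrow> 0"
    by (intro Lim_null_comparison[of D]) simp_all
  then obtain x where tail: "\<And>k. \<rho> (x - s k) 0 \<le> D k"
    using invariant_metric.telescoping_limit[where s = s and D = D, OF \<rho> s_step] by blast
  have "\<epsilon> (N (Suc k)) \<le> d (S (N (Suc k)) x) 0" for k
  proof -
    let ?S = "S (N (Suc k))"
    obtain c where c: "c \<le> d (?S (s (Suc k) - s k)) 0" "\<epsilon> (N (Suc k)) \<le> c / 2"
      "d (?S (s k)) 0 < c / 4" "\<forall>v. \<rho> v 0 \<le> D (Suc k) \<longrightarrow> d (?S v) 0 < c / 4"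
      using hump by blast
    have "?S x = ?S (s k) + ?S (s (Suc k) - s k) + ?S (x - s (Suc k))"
      by (simp add: linear_diff[OF lin] flip: linear_add[OF lin])
    then have "d (?S (s (Suc k) - s k)) 0
        \<le> d (?S x) 0 + d (?S (s k)) 0 + d (?S (x - s (Suc k))) 0"
      using invariant_metric.middle_le[OF d] by metis
    then show ?thesis
      using c tail[of "Suc k"] by fastforce
  qed
  moreover have "strict_mono N"
    using N_less by (rule strict_monoI_Suc)
  ultimately have "\<exists>n>m. \<epsilon> n \<le> d (S n x) 0" for m
    using seq_suble[of N "Suc m"] by (metis Suc_le_lessD)
  then show ?thesis
    unfolding INFM_nat by blast
qed

lemma not_bounded_conv_imp_almost_arbitrarily_slowly:
  fixes \<rho> :: "'a::real_vector \<Rightarrow> 'a \<Rightarrow> real" and d :: "'b::real_vector \<Rightarrow> 'b \<Rightarrow> real"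
  assumes \<rho>: "F_space \<rho>" and d: "metric_vector_space d"
    and T: "linear T" "continuous_op \<rho> d T"
    and Ts: "\<And>n. linear (Ts n)" "\<And>n. continuous_op \<rho> d (Ts n)"
    and pointwise: "pointwise_conv d Ts T" and not_bounded: "\<not> bounded_conv \<rho> d Ts T"
  shows "almost_arbitrarily_slowly d Ts T"
  unfolding almost_arbitrarily_slowly_def
proof (intro conjI allI impI)
  fix \<epsilon> :: "nat \<Rightarrow> real"
  assume "antimono \<epsilon> \<and> (\<forall>n. 0 \<le> \<epsilon> n) \<and> \<epsilon> \<longlonglongrightarrow> 0"
  have \<rho>': "metric_vector_space \<rho>" "metric_complete \<rho>"
    using \<rho> unfolding F_space_def by blast+
  interpret d: invariant_metric d
    using d by (rule metric_vector_space_invariant_metric)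
  have "\<exists>x. \<exists>\<^sub>\<infinity>n. \<epsilon> n \<le> d (Ts n x - T x) 0"
  proof (rule gliding_hump[where d = d and S = "\<lambda>n x. Ts n x - T x"])
    show "invariant_metric \<rho>"
      using \<rho>'(1) by (rule metric_vector_space_invariant_metric)
    show "(\<lambda>n. d (Ts n x - T x) 0) \<longlonglongrightarrow> 0" for x
      using pointwise unfolding pointwise_conv_def d.eq_diff_zero[symmetric] by blast
    show "\<exists>\<delta>>0. \<forall>v. \<rho> v 0 \<le> \<delta> \<longrightarrow> d (Ts n v - T v) 0 < \<eta>" if "\<eta> > 0" for n \<eta>
      using continuous_op_linear_diff_small[OF _ d.invariant_metric_axioms Ts(1,2) T that] \<rho>'(1)
      unfolding metric_vector_space_def by blast
    show "\<exists>c>0. \<forall>N. \<exists>n\<ge>N. \<exists>w. \<rho> w 0 < \<Delta> \<and> c \<le> d (Ts n w - T w) 0" if "\<Delta> > 0" for \<Delta>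
      using not_bounded_conv_small_humps[OF \<rho>'(1) d.invariant_metric_axioms Ts(1) T(1) not_bounded that] .
    show "linear (\<lambda>x. Ts n x - T x)" for n
      using Ts(1) T(1) by (rule linear_compose_sub)
  qed (use \<rho>'(2) \<open>antimono \<epsilon> \<and> _\<close> d.invariant_metric_axioms in blast)+
  then show "\<exists>x. \<exists>\<^sub>\<infinity>n. d (Ts n x) (T x) \<ge> \<epsilon> n"
    by (simp only: d.eq_diff_zero[symmetric])
qed (fact pointwise)

lemma metric_vs_bounded_scaleR:
  assumes "metric_vs_bounded \<rho> A" "c > 0"
  shows "metric_vs_bounded \<rho> ((\<lambda>x. c *\<^sub>R x) ` A)"
  unfolding metric_vs_bounded_def
proof (intro allI impI)
  fix r :: real assume "r > 0"
  then obtain c' where "c' > 0" and A: "A \<subseteq> (\<lambda>x. c' *\<^sub>R x) ` {x. \<rho> x 0 \<le> r}"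
    using assms(1) unfolding metric_vs_bounded_def by blast
  have "(\<lambda>x. c *\<^sub>R x) ` A \<subseteq> (\<lambda>x. (c * c') *\<^sub>R x) ` {x. \<rho> x 0 \<le> r}"
  proof
    fix y assume "y \<in> (\<lambda>x. c *\<^sub>R x) ` A"
    then obtain a where "a \<in> A" "y = c *\<^sub>R a"
      by (rule imageE)
    moreover obtain b where "\<rho> b 0 \<le> r" "a = c' *\<^sub>R b"
      using subsetD[OF A \<open>a \<in> A\<close>] by (rule imageE) simp
    ultimately show "y \<in> (\<lambda>x. (c * c') *\<^sub>R x) ` {x. \<rho> x 0 \<le> r}"
      by (intro image_eqI[of _ _ b]) auto
  qed
  moreover have "c * c' > 0"
    using assms(2) \<open>c' > 0\<close> by simp
  ultimately show "\<exists>k>0. (\<lambda>x. c *\<^sub>R x) ` A \<subseteq> (\<lambda>x. k *\<^sub>R x) ` {x. \<rho> x 0 \<le> r}"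
    by (intro exI[of _ "c * c'"] conjI)
qed

lemma locally_bounded_countable_cover:
  assumes "metric_vector_space \<rho>" "locally_bounded \<rho>"
  obtains B :: "nat \<Rightarrow> 'a::real_vector set"
  where "\<And>k. metric_vs_bounded \<rho> (B k)" "\<And>x. \<exists>k. x \<in> B k"
proof -
  obtain U r where U: "metric_vs_bounded \<rho> U" and "r > 0" and ball: "{x. \<rho> x 0 < r} \<subseteq> U"
    using assms(2) unfolding locally_bounded_def by blast
  define B where "B k = (\<lambda>x. real (Suc k) *\<^sub>R x) ` U" for k
  have "x \<in> B j" if "\<rho> (inverse (real (Suc j)) *\<^sub>R x) 0 < r" for x j
  proof -
    have "inverse (real (Suc j)) *\<^sub>R x \<in> U"
      using that ball by blast
    moreover have "x = real (Suc j) *\<^sub>R (inverse (real (Suc j)) *\<^sub>R x)"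
      by simp
    ultimately show ?thesis
      unfolding B_def by blast
  qed
  moreover have "\<exists>j. \<rho> (inverse (real (Suc j)) *\<^sub>R x) 0 < r" for x
  proof -
    have "(\<lambda>j. \<rho> (inverse (real (Suc j)) *\<^sub>R x) (0 *\<^sub>R x)) \<longlonglongrightarrow> 0"
      using metric_vector_space_scaleR_tendsto[OF assms(1) LIMSEQ_inverse_real_of_nat, of "\<lambda>j. x" x]
        invariant_metric.self[OF metric_vector_space_invariant_metric[OF assms(1)]] by simp
    then have "eventually (\<lambda>j. \<rho> (inverse (real (Suc j)) *\<^sub>R x) 0 < r) sequentially"
      using order_tendstoD(2)[OF _ \<open>r > 0\<close>] by simp
    then show ?thesis
      by (auto simp: eventually_sequentially)
  qed
  ultimately show thesis
  proof (intro that[of B])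
    show "metric_vs_bounded \<rho> (B k)" for k
      unfolding B_def by (rule metric_vs_bounded_scaleR[OF U]) simp
  qed blast
qed

lemma nat_lower_inverse:
  fixes G :: "nat \<Rightarrow> nat"
  assumes "\<And>j. j \<le> G j"
  obtains h where "mono h" "\<And>j n. G j \<le> n \<Longrightarrow> j \<le> h n" "\<And>n. h n = 0 \<or> G (h n) \<le> n"
proof
  define h where "h n = Max (insert 0 {j. G j \<le> n})" for n
  have "{j. G j \<le> n} \<subseteq> {..n}" for n
    using assms le_trans by blast
  then have fin: "finite (insert 0 {j. G j \<le> n})" for n
    using finite_subset by blast
  show "mono h"
    unfolding h_def mono_def using fin by (auto intro!: Max_mono)
  show "j \<le> h n" if "G j \<le> n" for j n
    unfolding h_def using that fin by (intro Max_ge) auto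
  show "h n = 0 \<or> G (h n) \<le> n" for n
    using Max_in[OF fin[of n]] unfolding h_def by auto
qed

lemma slowly_vanishing_sequence:
  fixes N :: "nat \<Rightarrow> real \<Rightarrow> nat"
  obtains \<epsilon> :: "nat \<Rightarrow> real"
  where "antimono \<epsilon>" "\<And>n. 0 < \<epsilon> n" "\<epsilon> \<longlonglongrightarrow> 0" "\<And>k. \<exists>M. \<forall>n\<ge>M. N k (\<epsilon> n) \<le> n"
proof -
  \<comment> \<open>\<open>\<epsilon>\<close> drops to \<open>1 / (j + 1)\<close> only at time \<open>G j\<close>, when every \<open>N k\<close> with \<open>k \<le> j\<close> has been passed.\<close>
  define G where "G j = j + (\<Sum>k\<le>j. N k (inverse (real (Suc j))))" for j
  have G_ge: "N k (inverse (real (Suc j))) \<le> G j" if "k \<le> j" for k j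
    unfolding G_def using member_le_sum[of k "{..j}" "\<lambda>k. N k (inverse (real (Suc j)))"] that
    by simp
  obtain h where h: "mono h" "\<And>j n. G j \<le> n \<Longrightarrow> j \<le> h n" "\<And>n. h n = 0 \<or> G (h n) \<le> n"
    using nat_lower_inverse[of G] unfolding G_def by auto
  define \<epsilon> where "\<epsilon> n = inverse (real (Suc (h n)))" for n
  show thesis
  proof
    show "antimono \<epsilon>"
      using h(1) unfolding \<epsilon>_def antimono_def mono_def by (auto intro!: le_imp_inverse_le)
    show "0 < \<epsilon> n" for n
      by (simp add: \<epsilon>_def)
    show "\<epsilon> \<longlonglongrightarrow> 0"
    proof (rule LIMSEQ_I)
      fix e :: real assume "e > 0"
      then obtain J where J: "inverse (real (Suc J)) < e"
        using reals_Archimedean by blast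
      have "\<epsilon> n < e" if "G J \<le> n" for n
      proof -
        have "real (Suc J) \<le> real (Suc (h n))"
          using h(2)[OF that] by simp
        then have "\<epsilon> n \<le> inverse (real (Suc J))"
          unfolding \<epsilon>_def by (rule le_imp_inverse_le) simp
        then show ?thesis
          using J by linarith
      qed
      then have "norm (\<epsilon> n - 0) < e" if "G J \<le> n" for n
        using that by (simp add: \<epsilon>_def)
      then show "\<exists>no. \<forall>n\<ge>no. norm (\<epsilon> n - 0) < e"
        by blast
    qed
    show "\<exists>M. \<forall>n\<ge>M. N k (\<epsilon> n) \<le> n" for k
    proof (intro exI allI impI)
      fix n assume "G (Suc k) \<le> n"
      then have "Suc k \<le> h n"
        by (rule h(2))
      then have "N k (\<epsilon> n) \<le> G (h n)" and "G (h n) \<le> n"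
        using G_ge[of k "h n"] h(3)[of n] unfolding \<epsilon>_def by auto
      then show "N k (\<epsilon> n) \<le> n"
        by linarith
    qed
  qed
qed

lemma almost_arbitrarily_slowly_imp_not_bounded_conv:
  fixes \<rho> :: "'a::real_vector \<Rightarrow> 'a \<Rightarrow> real"
  assumes "metric_vector_space \<rho>" "locally_bounded \<rho>" "almost_arbitrarily_slowly d Ts T"
  shows "\<not> bounded_conv \<rho> d Ts T"
proof
  assume "bounded_conv \<rho> d Ts T"
  obtain B :: "nat \<Rightarrow> 'a set"
    where B: "\<And>k. metric_vs_bounded \<rho> (B k)" "\<And>x. \<exists>k. x \<in> B k"
    using locally_bounded_countable_cover[OF assms(1,2)] by blast
  have "\<forall>k e. \<exists>N. e > 0 \<longrightarrow> (\<forall>n\<ge>N. \<forall>x\<in>B k. d (Ts n x) (T x) < e)"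
    using \<open>bounded_conv \<rho> d Ts T\<close> B(1) unfolding bounded_conv_def by blast
  then obtain N where N: "\<And>k e n x. e > 0 \<Longrightarrow> N k e \<le> n \<Longrightarrow> x \<in> B k \<Longrightarrow> d (Ts n x) (T x) < e"
    by metis
  obtain \<epsilon> where \<epsilon>: "antimono \<epsilon>" "\<And>n. 0 < \<epsilon> n" "\<epsilon> \<longlonglongrightarrow> 0" "\<And>k. \<exists>M. \<forall>n\<ge>M. N k (\<epsilon> n) \<le> n"
    using slowly_vanishing_sequence[of N] by blast
  then obtain x where x: "\<exists>\<^sub>\<infinity>n. \<epsilon> n \<le> d (Ts n x) (T x)"
    using assms(3) less_imp_le unfolding almost_arbitrarily_slowly_def by blast
  obtain k where k: "x \<in> B k"
    using B(2) by blast
  obtain M where M: "\<forall>n\<ge>M. N k (\<epsilon> n) \<le> n"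
    using \<epsilon>(4) by blast
  obtain n where "M \<le> n" "\<epsilon> n \<le> d (Ts n x) (T x)"
    using x unfolding INFM_nat_le by blast
  then show False
    using N[OF \<epsilon>(2) _ k, of n] M by fastforce
qed

theorem mainTheorem11:
  fixes \<rho> :: "'a::real_vector \<Rightarrow> 'a \<Rightarrow> real"
    and d :: "'b::real_vector \<Rightarrow> 'b \<Rightarrow> real"
    and T :: "'a \<Rightarrow> 'b" and Ts :: "nat \<Rightarrow> 'a \<Rightarrow> 'b"
  assumes "F_space \<rho>" and "locally_bounded \<rho>"
    and "metric_vector_space d" and "non_decreasing_metric d"
    and "linear T" and "continuous_op \<rho> d T"
    and "\<And>n. linear (Ts n)" and "\<And>n. continuous_op \<rho> d (Ts n)"
  shows "almost_arbitrarily_slowly d Ts T \<longleftrightarrow>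
           (pointwise_conv d Ts T \<and> \<not> bounded_conv \<rho> d Ts T)"
proof
  have \<rho>: "metric_vector_space \<rho>"
    using assms(1) unfolding F_space_def by blast
  show "pointwise_conv d Ts T \<and> \<not> bounded_conv \<rho> d Ts T"
    if "almost_arbitrarily_slowly d Ts T"
    using that almost_arbitrarily_slowly_imp_not_bounded_conv[OF \<rho> assms(2) that]
    unfolding almost_arbitrarily_slowly_def by blast
  show "almost_arbitrarily_slowly d Ts T"
    if "pointwise_conv d Ts T \<and> \<not> bounded_conv \<rho> d Ts T"
    using not_bounded_conv_imp_almost_arbitrarily_slowly[where Ts = Ts, OF assms(1,3,5,6,7,8)] that by blast
qed

end
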